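(* Let $A \in \mathbb{C}^{N\times N}$, let $\mathcal{P}$ be a linear subspace of $\mathbb{C}^N$, and let $\{\omega_j\}_{j\in\mathbb{N}} \subset \mathbb{C}\setminus\{0\}$. Let $\mathcal{G}_j$, $j \in \mathbb{N}_0$, be the Sonneveld spaces and $p_{i,j}$ the stabilization polynomials defined from these data (see context). Then for all $i<j$ in $\mathbb{N}_0$, $$\mathcal{G}_j = p_{i,j}(A)\cdot\big(\mathcal{G}_i \cap \mathcal{K}_{j-i}(A^H;\mathcal{P})^{\perp}\big).$$
   Context: For a subspace $\mathcal{T}\le\mathbb{C}^N$ and $j\in\mathbb{N}$, the block Krylov subspace of level $j$ is $\mathcal{K}_j(A;\mathcal{T}) := \operatorname{span}\{A^k \mathcal{T} : k=0,\dots,j-1\}$ (the sum of the subspaces $A^k\mathcal{T}$), and $\mathcal{K}_j(A^H;\mathcal{P})^\perp$ denotes the orthogonal complement of $\mathcal{K}_j(A^H;\mathcal{P})$ in $\mathbb{C}^N$ with respect to the standard Hermitian inner product; $A^H$ is the conjugate transpose. Sonneveld spaces: $\mathcal{G}_0 := \mathbb{C}^N$ and $\mathcal{G}_j := (I - \omega_j A)\cdot(\mathcal{G}_{j-1}\cap \mathcal{P}^\perp)$ for $j\in\mathbb{N}$. Stabilization polynomials: $p_{i,j}(t) := \prod_{k=i+1}^{j}(1-\omega_k t)$ for $j>i\ge 0$. *)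

theory Defs
  imports "HOL-Analysis.Analysis" "HOL-Computational_Algebra.Polynomial"
begin

text \<open>Complex N x N matrices are rendered as complex^'n^'n (N = CARD('n)),
  vectors of C^N as complex^'n; complex-linear subspaces via vec.subspace.\<close>

primrec mat_pow :: "complex^'n^'n \<Rightarrow> nat \<Rightarrow> complex^'n^'n" where
  "mat_pow A 0 = mat 1"
| "mat_pow A (Suc k) = A ** mat_pow A k"

definition poly_mat :: "complex poly \<Rightarrow> complex^'n^'n \<Rightarrow> complex^'n^'n" where
  "poly_mat p A = (\<Sum>k\<le>degree p. mat (coeff p k) ** mat_pow A k)"

definition conj_transpose :: "complex^'n^'n \<Rightarrow> complex^'n^'n" where
  "conj_transpose A = (\<chi> i j. cnj (A $ j $ i))"

definition herm_inner :: "complex^'n \<Rightarrow> complex^'n \<Rightarrow> complex" where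
  "herm_inner x y = (\<Sum>i\<in>UNIV. x $ i * cnj (y $ i))"

definition orth_compl :: "(complex^'n) set \<Rightarrow> (complex^'n) set" where
  "orth_compl S = {x. \<forall>y\<in>S. herm_inner x y = 0}"

definition block_krylov :: "complex^'n^'n \<Rightarrow> (complex^'n) set \<Rightarrow> nat \<Rightarrow> (complex^'n) set" where
  "block_krylov A T j = vec.span (\<Union>k<j. (\<lambda>v. mat_pow A k *v v) ` T)"

primrec sonneveld :: "complex^'n^'n \<Rightarrow> (complex^'n) set \<Rightarrow> (nat \<Rightarrow> complex) \<Rightarrow> nat \<Rightarrow> (complex^'n) set" where
  "sonneveld A P \<omega> 0 = UNIV"
| "sonneveld A P \<omega> (Suc j) =
     (\<lambda>v. (mat 1 - mat (\<omega> (Suc j)) ** A) *v v) ` (sonneveld A P \<omega> j \<inter> orth_compl P)"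

definition stab_poly :: "(nat \<Rightarrow> complex) \<Rightarrow> nat \<Rightarrow> nat \<Rightarrow> complex poly" where
  "stab_poly \<omega> i j = (\<Prod>k\<in>{i+1..j}. [:1, - \<omega> k:])"

end

theory Submission
  imports Defs
begin

text \<open>Induction on m = j - i. Let p = p(i, i+m), a polynomial of degree m with leading
  coefficient the product of the -omega(k). For v orthogonal to K(m) = K_m(A^H; P) and y in P,
  moving powers of A across the inner product gives, with c(k) the coefficients of p,
  <p(A) v, y> = sum of c(k) <v, (A^H)^k y> over k <= m, in which only the leading term
  c(m) <v, (A^H)^m y> survives. Hence p(A) v lies in P^perp exactly when v is orthogonal to
  K(m+1), so intersecting G(i+m) = p(A)(G(i) \<inter> K(m)^perp) with P^perp and applying
  I - omega(i+m+1) A yields the claim for m + 1.\<close>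

lemma mat_mult_vec: "(mat c :: 'a::comm_semiring_1^'n^'n) *v x = c *s x"
  by (simp add: vec_eq_iff matrix_vector_mult_def mat_def if_distrib[of "\<lambda>f. f _"]
      if_distrib[of "\<lambda>u. u * _"] cong: if_cong)

lemma sum_matrix_vector_mult: "(sum f S :: 'a::semiring_1^'n^'m) *v v = (\<Sum>k\<in>S. f k *v v)"
  by (induction S rule: infinite_finite_induct) (simp_all add: matrix_vector_mult_add_rdistrib)

lemma mat_pow_commute: "mat_pow A k ** A = A ** mat_pow A k"
proof (induction k)
  case (Suc k)
  have "mat_pow A (Suc k) ** A = A ** (mat_pow A k ** A)"
    by (simp add: matrix_mul_assoc)
  also have "\<dots> = A ** mat_pow A (Suc k)"
    using Suc by simp
  finally show ?case .
qed simp

lemma poly_mat_mult_vec: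
  assumes "degree p \<le> n"
  shows "poly_mat p A *v v = (\<Sum>k\<le>n. coeff p k *s (mat_pow A k *v v))"
proof -
  have "poly_mat p A *v v = (\<Sum>k\<le>degree p. coeff p k *s (mat_pow A k *v v))"
    unfolding poly_mat_def
    by (simp add: sum_matrix_vector_mult matrix_vector_mul_assoc[symmetric] mat_mult_vec)
  also have "\<dots> = (\<Sum>k\<le>n. coeff p k *s (mat_pow A k *v v))"
    using assms by (intro sum.mono_neutral_left) (auto simp: coeff_eq_0)
  finally show ?thesis .
qed

lemma poly_mat_add_mult_vec: "poly_mat (p + q) A *v v = poly_mat p A *v v + poly_mat q A *v v"
  using degree_add_le_max[of p q]
  by (simp add: poly_mat_mult_vec[of _ "max (degree p) (degree q)"] vector_sadd_rdistrib sum.distrib)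

lemma poly_mat_diff_mult_vec: "poly_mat (p - q) A *v v = poly_mat p A *v v - poly_mat q A *v v"
  using poly_mat_add_mult_vec[of "p - q" q A v] by simp

lemma poly_mat_smult_mult_vec: "poly_mat (smult c p) A *v v = c *s (poly_mat p A *v v)"
  by (simp add: poly_mat_mult_vec[of _ "degree p"] vec.scale_sum_right)

lemma poly_mat_pCons_0_mult_vec: "poly_mat (pCons 0 p) A *v v = A *v (poly_mat p A *v v)"
proof -
  have "poly_mat (pCons 0 p) A *v v
      = (\<Sum>k\<le>Suc (degree p). coeff (pCons 0 p) k *s (mat_pow A k *v v))"
    by (rule poly_mat_mult_vec) (simp add: degree_pCons_le)
  also have "\<dots> = (\<Sum>k\<le>degree p. coeff p k *s (mat_pow A (Suc k) *v v))"
    by (subst sum.atMost_Suc_shift) simp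
  also have "\<dots> = A *v (poly_mat p A *v v)"
    by (simp add: poly_mat_mult_vec[of _ "degree p"] vec.sum vec.scale matrix_vector_mul_assoc)
  finally show ?thesis .
qed

lemma poly_mat_mult_linear_mult_vec:
  "poly_mat (p * [:1, - w:]) A *v v = (mat 1 - mat w ** A) *v (poly_mat p A *v v)"
proof -
  have "p * [:1, - w:] = p - smult w (pCons 0 p)"
    by (simp add: algebra_simps)
  then have "poly_mat (p * [:1, - w:]) A *v v = poly_mat p A *v v - w *s (A *v (poly_mat p A *v v))"
    by (simp only: poly_mat_diff_mult_vec poly_mat_smult_mult_vec poly_mat_pCons_0_mult_vec)
  then show ?thesis
    by (simp add: matrix_vector_mult_diff_rdistrib matrix_vector_mul_assoc[symmetric] mat_mult_vec)
qed

lemma herm_inner_add_right: "herm_inner x (y + z) = herm_inner x y + herm_inner x z"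
  unfolding herm_inner_def by (simp add: distrib_left sum.distrib)

lemma herm_inner_zero_right: "herm_inner x 0 = 0"
  unfolding herm_inner_def by simp

lemma herm_inner_scale_right: "herm_inner x (c *s y) = cnj c * herm_inner x y"
  unfolding herm_inner_def by (simp add: sum_distrib_left mult_ac)

lemma herm_inner_scale_left: "herm_inner (c *s x) y = c * herm_inner x y"
  unfolding herm_inner_def by (simp add: sum_distrib_left mult_ac)

lemma herm_inner_sum_left: "herm_inner (sum f S) y = (\<Sum>k\<in>S. herm_inner (f k) y)"
  unfolding herm_inner_def
  by (induction S rule: infinite_finite_induct) (simp_all add: distrib_right sum.distrib)

lemma herm_inner_matrix_vector_mult:
  "herm_inner (A *v x) y = herm_inner x (conj_transpose A *v y)"
proof -
  have "herm_inner (A *v x) y = (\<Sum>i\<in>UNIV. \<Sum>j\<in>UNIV. A$i$j * x$j * cnj (y$i))"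
    unfolding herm_inner_def matrix_vector_mult_def by (simp add: sum_distrib_right)
  also have "\<dots> = (\<Sum>j\<in>UNIV. x$j * (\<Sum>i\<in>UNIV. A$i$j * cnj (y$i)))"
    by (subst sum.swap) (simp add: sum_distrib_left mult_ac)
  also have "\<dots> = herm_inner x (conj_transpose A *v y)"
    unfolding herm_inner_def conj_transpose_def matrix_vector_mult_def by (simp add: cnj_sum)
  finally show ?thesis .
qed

lemma herm_inner_mat_pow:
  "herm_inner (mat_pow A k *v x) y = herm_inner x (mat_pow (conj_transpose A) k *v y)"
proof (induction k arbitrary: y)
  case (Suc k)
  have "herm_inner (mat_pow A (Suc k) *v x) y
      = herm_inner (mat_pow A k *v x) (conj_transpose A *v y)"
    by (simp add: matrix_vector_mul_assoc[symmetric] herm_inner_matrix_vector_mult)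
  also have "\<dots> = herm_inner x (mat_pow (conj_transpose A) (Suc k) *v y)"
    by (simp add: Suc matrix_vector_mul_assoc mat_pow_commute)
  finally show ?case .
qed simp

lemma orth_compl_span: "orth_compl (vec.span S) = orth_compl S"
proof (intro set_eqI iffI)
  fix v
  assume v: "v \<in> orth_compl S"
  have "vec.subspace {y. herm_inner v y = 0}"
    unfolding vec.subspace_def
    by (simp add: herm_inner_add_right herm_inner_scale_right herm_inner_zero_right)
  then have "vec.span S \<subseteq> {y. herm_inner v y = 0}"
    using v by (intro vec.span_minimal) (auto simp: orth_compl_def)
  then show "v \<in> orth_compl (vec.span S)"
    by (auto simp: orth_compl_def)
qed (use vec.span_superset in \<open>auto simp: orth_compl_def\<close>)

lemma orth_compl_block_krylov_iff:
  "v \<in> orth_compl (block_krylov B P m) \<longleftrightarrow>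
     (\<forall>k<m. \<forall>y\<in>P. herm_inner v (mat_pow B k *v y) = 0)"
  unfolding block_krylov_def orth_compl_span by (auto simp: orth_compl_def)

lemma orth_compl_block_krylov_Suc_iff:
  "v \<in> orth_compl (block_krylov B P (Suc m)) \<longleftrightarrow>
     v \<in> orth_compl (block_krylov B P m) \<and> (\<forall>y\<in>P. herm_inner v (mat_pow B m *v y) = 0)"
  unfolding orth_compl_block_krylov_iff using less_Suc_eq by auto

lemma stab_poly_Suc:
  "i \<le> j \<Longrightarrow> stab_poly \<omega> i (Suc j) = stab_poly \<omega> i j * [:1, - \<omega> (Suc j):]"
  unfolding stab_poly_def by (simp add: atLeastAtMostSuc_conv mult.commute)

lemma stab_poly_nonzero: "stab_poly \<omega> i j \<noteq> 0"
  unfolding stab_poly_def by (auto simp: prod_zero_iff)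

lemma degree_stab_poly:
  assumes "\<And>k. i < k \<Longrightarrow> k \<le> j \<Longrightarrow> \<omega> k \<noteq> 0"
  shows "degree (stab_poly \<omega> i j) = j - i"
proof -
  have "degree (stab_poly \<omega> i j) = (\<Sum>k\<in>{i+1..j}. degree [:1, - \<omega> k:])"
    unfolding stab_poly_def by (rule degree_prod_eq_sum_degree) simp
  also have "\<dots> = card {i+1..j}"
    using assms by simp
  finally show ?thesis
    by simp
qed

lemma herm_inner_poly_mat_orth_block_krylov:
  assumes "v \<in> orth_compl (block_krylov (conj_transpose A) P m)" and "degree p = m" and "y \<in> P"
  shows "herm_inner (poly_mat p A *v v) y
    = lead_coeff p * herm_inner v (mat_pow (conj_transpose A) m *v y)"
proof -
  have "herm_inner (poly_mat p A *v v) y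
      = (\<Sum>k<Suc m. coeff p k * herm_inner v (mat_pow (conj_transpose A) k *v y))"
    using assms(2)
    by (simp add: poly_mat_mult_vec[of p m] herm_inner_sum_left herm_inner_scale_left
        herm_inner_mat_pow lessThan_Suc_atMost)
  also have "\<dots> = lead_coeff p * herm_inner v (mat_pow (conj_transpose A) m *v y)"
    using assms by (simp add: orth_compl_block_krylov_iff)
  finally show ?thesis .
qed

lemma poly_mat_mult_vec_in_orth_compl_iff:
  assumes "v \<in> orth_compl (block_krylov (conj_transpose A) P m)" and "degree p = m" and "p \<noteq> 0"
  shows "poly_mat p A *v v \<in> orth_compl P \<longleftrightarrow> v \<in> orth_compl (block_krylov (conj_transpose A) P (Suc m))"
proof -
  have "lead_coeff p \<noteq> 0"
    using assms(3) by simp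
  then show ?thesis
    using herm_inner_poly_mat_orth_block_krylov[OF assms(1,2)] assms(1,2)
    by (simp add: orth_compl_def[of P] orth_compl_block_krylov_Suc_iff)
qed

lemma sonneveld_add_eq_image:
  assumes "\<And>k. i < k \<Longrightarrow> k \<le> i + m \<Longrightarrow> \<omega> k \<noteq> 0"
  shows "sonneveld A P \<omega> (i + m) =
    (\<lambda>v. poly_mat (stab_poly \<omega> i (i + m)) A *v v) `
      (sonneveld A P \<omega> i \<inter> orth_compl (block_krylov (conj_transpose A) P m))"
  using assms
proof (induction m)
  case 0
  have "poly_mat (stab_poly \<omega> i i) A *v v = v" for v
    by (simp add: stab_poly_def poly_mat_mult_vec[of _ 0])
  moreover have "orth_compl (block_krylov (conj_transpose A) P 0) = UNIV"
    by (auto simp: orth_compl_block_krylov_iff)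
  ultimately show ?case
    by simp
next
  case (Suc m)
  define p where "p = stab_poly \<omega> i (i + m)"
  define K where "K m = orth_compl (block_krylov (conj_transpose A) P m)" for m
  define f where "f v = (mat 1 - mat (\<omega> (Suc (i + m))) ** A) *v v" for v
  have "degree p = m"
    using Suc.prems by (simp add: p_def degree_stab_poly)
  then have p_orth_iff: "poly_mat p A *v v \<in> orth_compl P \<longleftrightarrow> v \<in> K (Suc m)" if "v \<in> K m" for v
    using poly_mat_mult_vec_in_orth_compl_iff[of v A P m p] that stab_poly_nonzero
    by (simp add: p_def K_def)
  have "K (Suc m) \<subseteq> K m"
    by (auto simp: K_def orth_compl_block_krylov_Suc_iff)
  then have "(\<lambda>v. poly_mat p A *v v) ` (sonneveld A P \<omega> i \<inter> K m) \<inter> orth_compl P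
      = (\<lambda>v. poly_mat p A *v v) ` (sonneveld A P \<omega> i \<inter> K (Suc m))"
    using p_orth_iff by blast
  moreover have "stab_poly \<omega> i (i + Suc m) = p * [:1, - \<omega> (Suc (i + m)):]"
    by (simp add: p_def stab_poly_Suc)
  then have "f (poly_mat p A *v v) = poly_mat (stab_poly \<omega> i (i + Suc m)) A *v v" for v
    by (simp only: f_def poly_mat_mult_linear_mult_vec)
  ultimately have "f ` (sonneveld A P \<omega> (i + m) \<inter> orth_compl P)
      = (\<lambda>v. poly_mat (stab_poly \<omega> i (i + Suc m)) A *v v) ` (sonneveld A P \<omega> i \<inter> K (Suc m))"
    using Suc by (simp add: p_def K_def image_image)
  then show ?case
    by (simp add: f_def K_def)
qed

theorem lemma1:
  fixes A :: "complex^'n^'n" and P :: "(complex^'n) set" and \<omega> :: "nat \<Rightarrow> complex"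
    and i j :: nat
  assumes "vec.subspace P"
    and "\<forall>k\<ge>1. \<omega> k \<noteq> 0"
    and "i < j"
  shows "sonneveld A P \<omega> j =
    (\<lambda>v. poly_mat (stab_poly \<omega> i j) A *v v) `
      (sonneveld A P \<omega> i \<inter> orth_compl (block_krylov (conj_transpose A) P (j - i)))"
  using sonneveld_add_eq_image[of i "j - i" \<omega> A P] assms(2,3) by simp

end
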